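(* Let $\tau$ be a tau-function of the extended bigraded Toda hierarchy with wave operators $W,\bar W$. For every $n\ge1$, $$-\frac{\bigl((L^{\frac{-n}{k}})_-W\bigr)z^s}{Wz^s}=G(z)(nt_n)-nt_n,\qquad \frac{\bigl((L^{\frac{-n}{k}})_+\bar W\bigr)z^s}{\bar Wz^s}=\bar G(z)(nt_n)-nt_n,$$ and $$-\frac{\bigl((L^{\frac{-n}{m}})_-W\bigr)z^s}{Wz^s}=G(z)(n\bar t_n)-n\bar t_n,\qquad \frac{\bigl((L^{\frac{-n}{m}})_+\bar W\bigr)z^s}{\bar Wz^s}=\bar G(z)(n\bar t_n)-n\bar t_n.$$ That is, the vector fields on tau-functions induced by $\partial^*_{L^{\frac{-n}{k}}}$ and $\partial^*_{L^{\frac{-n}{m}}}$ are multiplication by $nt_n$ and $n\bar t_n$, respectively, up to adding a function from $\mathcal F$.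
   Context: Let $s$ be a variable, $\Lambda$ the shift $(\Lambda f)(s)=f(s+1)$, $\mathcal A$ the space of formal difference operators $\sum_{i\in\mathbb Z}a_i(s)\Lambda^i$, $A_+=\sum_{i\ge0}a_i\Lambda^i$, $A_-=\sum_{i<0}a_i\Lambda^i$, products $(a(s)\Lambda^i)(b(s)\Lambda^j)=a(s)b(s+i)\Lambda^{i+j}$ where defined; operators act on $z^s$ by $(a(s)\Lambda^i)z^s=a(s)z^iz^s$. Fix $k,m\ge1$. Variables: $s=x_0$, $\mathbf x=(x_1,\dots)$, $\mathbf t=(t_1,\dots)$, $\bar{\mathbf t}=(\bar t_1,\dots)$, with $t_{nk}$ and $\bar t_{nm}$ distinct. Let $[z]=(z,z^2/2,z^3/3,\dots)$; for a function $g(s,\mathbf t,\bar{\mathbf t},\mathbf x)$ put $G(z)g=g(s,\mathbf t-[z^{-1}],\bar{\mathbf t},\mathbf x)$, $\bar G(z)g=g(s+1,\mathbf t,\bar{\mathbf t}+[z],\mathbf x)$. A tau-function of the EBTH is a function $\tau(s,\mathbf t,\bar{\mathbf t},\mathbf x)$ such that, writing $G(z)\tau/\tau=1+\sum_{i\ge1}w_iz^{-i}$, $\bar G(z)\tau/\tau=\sum_{i\ge0}\bar w_iz^i$, the operators $W=1+\sum w_i\Lambda^{-i}$, $\bar W=\sum\bar w_i\Lambda^i$ ($\bar w_0\ne0$) satisfy $W\Lambda^kW^{-1}=\bar W\Lambda^{-m}\bar W^{-1}=:L$ with $L=\Lambda^k+\dots+u_{-m}\Lambda^{-m}$ ($u_{-m}\ne0$)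 and the EBTH flows $\partial_{t_n}W=-(L^{\frac nk})_-W$, $\partial_{t_n}\bar W=(L^{\frac nk})_+\bar W$, $\partial_{\bar t_n}W=-(L^{\frac nm})_-W$, $\partial_{\bar t_n}\bar W=(L^{\frac nm})_+\bar W$, $\partial_{x_n}W=-(2L^n\log L)_-W$, $\partial_{x_n}\bar W=(2L^n\log L)_+\bar W$, where $L^{\frac nk}:=W\Lambda^nW^{-1}$, $L^{\frac nm}:=\bar W\Lambda^{-n}\bar W^{-1}$ ($n\in\mathbb Z$) and $\log L=\frac12W\partial_sW^{-1}-\frac12\bar W\partial_s\bar W^{-1}$. For a difference operator $a$ commuting with $L$, $\partial^*_a$ denotes the symmetry $W\mapsto-a_-W$, $\bar W\mapsto a_+\bar W$. $\mathcal F$ is the space of functions $f(s,\mathbf x)$ with $f(s+1,\mathbf x)=f(s,\mathbf x)$. *)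

theory Defs
  imports "HOL-Analysis.Analysis" "HOL-Library.Groups_Big_Fun"
begin

(* A point (s, t, tbar, x) of the space of independent variables; s = x_0.
   Index 0 of tv, tbv, xv is unused (times are t_1, t_2, ...). *)
record pt =
  sv  :: complex
  tv  :: "nat \<Rightarrow> complex"
  tbv :: "nat \<Rightarrow> complex"
  xv  :: "nat \<Rightarrow> complex"

type_synonym fn = "pt \<Rightarrow> complex"

(* difference operator  sum_i a_i(s,...) Lambda^i  as its coefficient family i |-> a_i *)
type_synonym dop = "int \<Rightarrow> fn"

definition shiftpt :: "int \<Rightarrow> pt \<Rightarrow> pt" where
  "shiftpt i p = p\<lparr>sv := sv p + of_int i\<rparr>"

(* (a Lambda^i)(b Lambda^j) = a(s) b(s+i) Lambda^(i+j), extended bilinearly;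
   the coefficient sum is finite whenever the product is defined *)
definition opmult :: "dop \<Rightarrow> dop \<Rightarrow> dop" where
  "opmult A B = (\<lambda>j p. Sum_any (\<lambda>i. A i p * B (j - i) (shiftpt i p)))"

definition Lam :: "int \<Rightarrow> dop" where
  "Lam n = (\<lambda>i p. if i = n then 1 else 0)"

definition opplus :: "dop \<Rightarrow> dop" where
  "opplus A = (\<lambda>i p. if 0 \<le> i then A i p else 0)"

definition opminus :: "dop \<Rightarrow> dop" where
  "opminus A = (\<lambda>i p. if i < 0 then A i p else 0)"

definition opsub :: "dop \<Rightarrow> dop \<Rightarrow> dop" where
  "opsub A B = (\<lambda>i p. A i p - B i p)"

definition opscale :: "complex \<Rightarrow> dop \<Rightarrow> dop" where
  "opscale c A = (\<lambda>i p. c * A i p)"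

primrec oppow :: "dop \<Rightarrow> nat \<Rightarrow> dop" where
  "oppow A 0 = Lam 0"
| "oppow A (Suc n) = opmult A (oppow A n)"

definition lower_inv :: "dop \<Rightarrow> dop" where
  "lower_inv W = (THE V. (\<forall>i>0. V i = (\<lambda>p. 0)) \<and> opmult W V = Lam 0 \<and> opmult V W = Lam 0)"

definition upper_inv :: "dop \<Rightarrow> dop" where
  "upper_inv W = (THE V. (\<forall>i<0. V i = (\<lambda>p. 0)) \<and> opmult W V = Lam 0 \<and> opmult V W = Lam 0)"

definition opds :: "dop \<Rightarrow> dop" where
  "opds A = (\<lambda>i p. deriv (\<lambda>y. A i (p\<lparr>sv := y\<rparr>)) (sv p))"

(* log L = 1/2 W d_s W^-1 - 1/2 Wb d_s Wb^-1, where W o d_s o W^-1 = d_s + W (W^-1)_s *)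
definition logL :: "dop \<Rightarrow> dop \<Rightarrow> dop" where
  "logL W Wb = opsub (opscale (1/2) (opmult W (opds (lower_inv W))))
                     (opscale (1/2) (opmult Wb (opds (upper_inv Wb))))"

(* L^(n/k) := W Lambda^n W^-1 ,  L^(n/m) := Wb Lambda^(-n) Wb^-1 *)
definition fracK :: "dop \<Rightarrow> int \<Rightarrow> dop" where
  "fracK W n = opmult (opmult W (Lam n)) (lower_inv W)"

definition fracM :: "dop \<Rightarrow> int \<Rightarrow> dop" where
  "fracM Wb n = opmult (opmult Wb (Lam (- n))) (upper_inv Wb)"

definition has_dt :: "nat \<Rightarrow> fn \<Rightarrow> pt \<Rightarrow> complex \<Rightarrow> bool" where
  "has_dt n f p D \<longleftrightarrow> ((\<lambda>y. f (p\<lparr>tv := (tv p)(n := y)\<rparr>)) has_field_derivative D) (at (tv p n))"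

definition has_dtb :: "nat \<Rightarrow> fn \<Rightarrow> pt \<Rightarrow> complex \<Rightarrow> bool" where
  "has_dtb n f p D \<longleftrightarrow> ((\<lambda>y. f (p\<lparr>tbv := (tbv p)(n := y)\<rparr>)) has_field_derivative D) (at (tbv p n))"

definition has_dx :: "nat \<Rightarrow> fn \<Rightarrow> pt \<Rightarrow> complex \<Rightarrow> bool" where
  "has_dx n f p D \<longleftrightarrow> ((\<lambda>y. f (p\<lparr>xv := (xv p)(n := y)\<rparr>)) has_field_derivative D) (at (xv p n))"

(* action on z^s, divided by z^s:  (sum a_i Lambda^i) z^s = (sum a_i z^i) z^s *)
definition act :: "dop \<Rightarrow> pt \<Rightarrow> complex \<Rightarrow> complex" where
  "act A p z = (\<Sum>\<^sub>\<infinity>i. A i p * z powi i)"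

definition bracket :: "complex \<Rightarrow> nat \<Rightarrow> complex" where
  "bracket z j = z ^ j / of_nat j"

definition Gop :: "complex \<Rightarrow> fn \<Rightarrow> fn" where
  "Gop z g p = g (p\<lparr>tv := (\<lambda>j. tv p j - bracket (1 / z) j)\<rparr>)"

definition Gbar :: "complex \<Rightarrow> fn \<Rightarrow> fn" where
  "Gbar z g p = g (p\<lparr>sv := sv p + 1, tbv := (\<lambda>j. tbv p j + bracket z j)\<rparr>)"

definition Wop :: "(nat \<Rightarrow> fn) \<Rightarrow> dop" where
  "Wop w = (\<lambda>i p. if i = 0 then 1 else if i < 0 then w (nat (- i)) p else 0)"

definition Wbop :: "(nat \<Rightarrow> fn) \<Rightarrow> dop" where
  "Wbop wb = (\<lambda>i p. if 0 \<le> i then wb (nat i) p else 0)"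

definition tau_EBTH :: "nat \<Rightarrow> nat \<Rightarrow> fn \<Rightarrow> (nat \<Rightarrow> fn) \<Rightarrow> (nat \<Rightarrow> fn) \<Rightarrow> bool" where
  "tau_EBTH k m \<tau> w wb \<longleftrightarrow>
    (\<forall>p. \<forall>\<^sub>F z in at_infinity.
        ((\<lambda>i. Wop w i p * z powi i) has_sum (Gop z \<tau> p / \<tau> p)) UNIV) \<and>
    (\<forall>p. \<forall>\<^sub>F z in at 0.
        ((\<lambda>i. Wbop wb i p * z powi i) has_sum (Gbar z \<tau> p / \<tau> p)) UNIV) \<and>
    (\<forall>p. wb 0 p \<noteq> 0) \<and>
    (let W = Wop w; Wb = Wbop wb; L = opmult (opmult W (Lam (int k))) (lower_inv W) in
      L = opmult (opmult Wb (Lam (- int m))) (upper_inv Wb) \<and>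
      (\<forall>i. i > int k \<or> i < - int m \<longrightarrow> L i = (\<lambda>p. 0)) \<and>
      L (int k) = (\<lambda>p. 1) \<and> (\<forall>p. L (- int m) p \<noteq> 0) \<and>
      (\<forall>n\<ge>1. \<forall>i p.
         has_dt n (W i) p (- opmult (opminus (fracK W (int n))) W i p) \<and>
         has_dt n (Wb i) p (opmult (opplus (fracK W (int n))) Wb i p) \<and>
         has_dtb n (W i) p (- opmult (opminus (fracM Wb (int n))) W i p) \<and>
         has_dtb n (Wb i) p (opmult (opplus (fracM Wb (int n))) Wb i p) \<and>
         has_dx n (W i) p
           (- opmult (opminus (opscale 2 (opmult (oppow L n) (logL W Wb)))) W i p) \<and>
         has_dx n (Wb i) p
           (opmult (opplus (opscale 2 (opmult (oppow L n) (logL W Wb)))) Wb i p)))"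

end

theory Submission
  imports Defs
begin

text \<open>For \<open>n \<ge> 1\<close> the operator \<open>L^(-n/k) = W \<Lambda>^(-n) W^(-1)\<close> has degree \<open>-n < 0\<close>: it is its own
  negative part, its positive part vanishes, and \<open>(L^(-n/k))_- W = W \<Lambda>^(-n)\<close> multiplies \<open>W z^s\<close>
  by \<open>z^(-n)\<close>. Dually \<open>L^(-n/m) = Wbar \<Lambda>^n Wbar^(-1)\<close> has order \<open>n > 0\<close>, so only its positive
  part survives and \<open>(L^(-n/m))_+ Wbar = Wbar \<Lambda>^n\<close>. On the other side, \<open>G(z)\<close> changes \<open>n t_n\<close>
  by \<open>-z^(-n)\<close> and fixes \<open>tbar\<close>, while \<open>Gbar(z)\<close> changes \<open>n tbar_n\<close> by \<open>z^n\<close> and fixes \<open>t\<close>.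
  The only analytic input is that \<open>W z^s\<close> and \<open>Wbar z^s\<close> do not vanish near \<open>z = \<infinity>\<close>
  resp. \<open>z = 0\<close>, being convergent power series in \<open>1/z\<close> resp. \<open>z\<close> with nonzero constant term.\<close>

lemma opmult_apply: "opmult A B j p = Sum_any (\<lambda>i. A i p * B (j - i) (shiftpt i p))"
  by (simp add: opmult_def)

lemma shiftpt_shiftpt [simp]: "shiftpt a (shiftpt b p) = shiftpt (b + a) p"
  by (simp add: shiftpt_def add.assoc)

lemma shiftpt_0 [simp]: "shiftpt 0 p = p"
  by (simp add: shiftpt_def)

lemma opmult_Lam_right: "opmult A (Lam n) j p = A (j - n) p"
proof -
  have "opmult A (Lam n) j p = (\<Sum>i\<in>{j - n}. A i p * Lam n (j - i) (shiftpt i p))"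
    unfolding opmult_apply by (rule Sum_any.expand_superset) (auto simp: Lam_def)
  then show ?thesis by (simp add: Lam_def)
qed

lemma opmult_Lam_left: "opmult (Lam n) A j p = A (j - n) (shiftpt n p)"
proof -
  have "opmult (Lam n) A j p = (\<Sum>i\<in>{n}. Lam n i p * A (j - i) (shiftpt i p))"
    unfolding opmult_apply by (rule Sum_any.expand_superset) (auto simp: Lam_def)
  then show ?thesis by (simp add: Lam_def)
qed

lemma opmult_Lam0_right [simp]: "opmult A (Lam 0) = A"
  by (intro ext) (simp add: opmult_Lam_right)

lemma opmult_Lam0_left [simp]: "opmult (Lam 0) A = A"
  by (intro ext) (simp add: opmult_Lam_left)

lemma opmult_zero_left [simp]: "opmult (\<lambda>i p. 0) A = (\<lambda>i p. 0)"
  by (intro ext) (simp add: opmult_apply)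

definition opdeg_le :: "dop \<Rightarrow> int \<Rightarrow> bool" where
  "opdeg_le A a \<longleftrightarrow> (\<forall>i>a. A i = (\<lambda>p. 0))"

definition opord_ge :: "dop \<Rightarrow> int \<Rightarrow> bool" where
  "opord_ge A a \<longleftrightarrow> (\<forall>i<a. A i = (\<lambda>p. 0))"

lemma opdeg_leD: "opdeg_le A a \<Longrightarrow> A i p \<noteq> 0 \<Longrightarrow> i \<le> a"
  unfolding opdeg_le_def by (metis not_le)

lemma opdeg_le_Lam: "opdeg_le (Lam n) n"
  by (simp add: opdeg_le_def Lam_def)

lemma opdeg_le_opmult:
  assumes "opdeg_le A a" "opdeg_le B b"
  shows "opdeg_le (opmult A B) (a + b)"
  unfolding opdeg_le_def
proof (intro allI impI ext)
  fix j p assume "j > a + b"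
  then have "(\<lambda>i. A i p * B (j - i) (shiftpt i p)) = (\<lambda>_. 0)"
    using opdeg_leD[OF assms(1)] opdeg_leD[OF assms(2)] by force
  then show "opmult A B j p = 0" by (simp only: opmult_apply Sum_any.neutral)
qed

lemma opminus_opplus_opdeg_le:
  assumes "opdeg_le A a" "a < 0"
  shows "opminus A = A" "opplus A = (\<lambda>i p. 0)"
  using assms by (auto simp: opminus_def opplus_def opdeg_le_def fun_eq_iff)

lemma opplus_opminus_opord_ge:
  assumes "opord_ge A a" "0 \<le> a"
  shows "opplus A = A" "opminus A = (\<lambda>i p. 0)"
  using assms by (auto simp: opminus_def opplus_def opord_ge_def fun_eq_iff)

lemma opmult_assoc_opdeg_le:
  assumes A: "opdeg_le A a" and B: "opdeg_le B b" and C: "opdeg_le C c"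
  shows "opmult (opmult A B) C = opmult A (opmult B C)"
proof (intro ext)
  fix j p
  define X where "X l i = A l p * B (i - l) (shiftpt l p) * C (j - i) (shiftpt i p)" for l i
  have X_nz: "l \<in> {j - c - b..a} \<and> i \<in> {j - c..a + b}" if "X l i \<noteq> 0" for l i
  proof -
    have "l \<le> a" "i - l \<le> b" "j - i \<le> c"
      using that opdeg_leD[OF A] opdeg_leD[OF B] opdeg_leD[OF C] by (auto simp: X_def)
    then show ?thesis by auto
  qed
  have "opmult (opmult A B) C j p = Sum_any (\<lambda>i. Sum_any (\<lambda>l. X l i))"
  proof -
    have "finite {l. A l p * B (i - l) (shiftpt l p) \<noteq> 0}" for i
      by (rule finite_subset[of _ "{i - b..a}"])
        (use opdeg_leD[OF A, of _ p] opdeg_leD[OF B] in force)+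
    then show ?thesis
      by (simp add: opmult_apply X_def Sum_any_left_distrib)
  qed
  also have "\<dots> = Sum_any (\<lambda>l. Sum_any (\<lambda>i. X l i))"
    by (rule Sum_any.swap[symmetric, of "{j - c - b..a} \<times> {j - c..a + b}"]) (use X_nz in auto)
  also have "\<dots> = opmult A (opmult B C) j p"
  proof -
    have fin: "finite {r. B r (shiftpt l p) * C (j - l - r) (shiftpt (l + r) p) \<noteq> 0}" for l
      by (rule finite_subset[of _ "{j - l - c..b}"])
        (use opdeg_leD[OF B] opdeg_leD[OF C] in force)+
    have "Sum_any (X l) = A l p * Sum_any (\<lambda>r. B r (shiftpt l p) * C (j - l - r) (shiftpt (l + r) p))" for l
    proof -
      have "Sum_any (X l) = Sum_any (\<lambda>r. X l (l + r))"
        by (rule Sum_any.reindex_cong[OF bij_plus]) auto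
      also have "\<dots> = Sum_any (\<lambda>r. A l p * (B r (shiftpt l p) * C (j - l - r) (shiftpt (l + r) p)))"
        by (simp add: X_def mult.assoc algebra_simps)
      finally show ?thesis
        by (simp only: Sum_any_right_distrib[OF fin])
    qed
    then show ?thesis by (simp add: opmult_apply)
  qed
  finally show "opmult (opmult A B) C j p = opmult A (opmult B C) j p" .
qed

text \<open>The coefficient of \<open>\<Lambda>^(-d)\<close> in a left inverse \<open>V\<close> of an operator \<open>A\<close> of degree \<open>\<le> 0\<close>,
  solved from the coefficient of \<open>\<Lambda>^(-d)\<close> in \<open>V A = 1\<close>.\<close>
fun left_inv_coeff :: "dop \<Rightarrow> nat \<Rightarrow> pt \<Rightarrow> complex" where
  "left_inv_coeff A d p = ((if d = 0 then 1 else 0)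
      - (\<Sum>e<d. left_inv_coeff A e p * A (int e - int d) (shiftpt (- int e) p)))
      / A 0 (shiftpt (- int d) p)"

declare left_inv_coeff.simps [simp del]

definition left_inv :: "dop \<Rightarrow> dop" where
  "left_inv A = (\<lambda>i p. if i \<le> 0 then left_inv_coeff A (nat (- i)) p else 0)"

lemma opdeg_le_left_inv: "opdeg_le (left_inv A) 0"
  by (simp add: opdeg_le_def left_inv_def)

lemma left_inv_0: "left_inv A 0 p = 1 / A 0 p"
  unfolding left_inv_def by (subst left_inv_coeff.simps) simp

lemma opmult_left_inv:
  assumes A: "opdeg_le A 0" and A0: "\<forall>p. A 0 p \<noteq> 0"
  shows "opmult (left_inv A) A = Lam 0"
proof (intro ext)
  fix j p
  show "opmult (left_inv A) A j p = Lam 0 j p"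
  proof (cases "j > 0")
    case True
    have "opdeg_le (opmult (left_inv A) A) (0 + 0)"
      by (rule opdeg_le_opmult[OF opdeg_le_left_inv A])
    then show ?thesis using True by (simp add: opdeg_le_def Lam_def)
  next
    case False
    define d where "d = nat (- j)"
    have j: "j = - int d" using False d_def by simp
    have "opmult (left_inv A) A j p
        = (\<Sum>i\<in>(\<lambda>e. - int e) ` {..d}. left_inv A i p * A (j - i) (shiftpt i p))"
      unfolding opmult_apply
    proof (rule Sum_any.expand_superset, simp, rule)
      fix i assume "i \<in> {i. left_inv A i p * A (j - i) (shiftpt i p) \<noteq> 0}"
      then have "left_inv A i p \<noteq> 0" "A (j - i) (shiftpt i p) \<noteq> 0" by auto
      then have "i \<le> 0" "j - i \<le> 0"
        using opdeg_leD[OF opdeg_le_left_inv, of A i p] opdeg_leD[OF A, of "j - i"] by auto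
      then show "i \<in> (\<lambda>e. - int e) ` {..d}"
        by (intro image_eqI[of _ _ "nat (- i)"]) (auto simp: j)
    qed
    also have "\<dots> = (\<Sum>e\<le>d. left_inv_coeff A e p * A (int e - int d) (shiftpt (- int e) p))"
      by (subst sum.reindex) (auto simp: inj_on_def left_inv_def j)
    also have "\<dots> = (\<Sum>e<d. left_inv_coeff A e p * A (int e - int d) (shiftpt (- int e) p))
                    + left_inv_coeff A d p * A 0 (shiftpt (- int d) p)"
      by (simp add: lessThan_Suc_atMost[symmetric])
    also have "left_inv_coeff A d p * A 0 (shiftpt (- int d) p) = (if d = 0 then 1 else 0)
         - (\<Sum>e<d. left_inv_coeff A e p * A (int e - int d) (shiftpt (- int e) p))"
      using A0 by (subst left_inv_coeff.simps) (simp add: field_simps)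
    finally show ?thesis by (simp add: Lam_def j)
  qed
qed

lemma lower_inverse_unique:
  assumes "opdeg_le A 0" "opdeg_le V 0" "opdeg_le V' 0"
    and "opmult V A = Lam 0" "opmult A V' = Lam 0"
  shows "V = V'"
proof -
  have "V = opmult V (opmult A V')" by (simp add: assms(5))
  also have "\<dots> = opmult (opmult V A) V'"
    by (rule opmult_assoc_opdeg_le[symmetric]) (use assms in blast)+
  finally show ?thesis by (simp add: assms(4))
qed

lemma lower_inv_eqI:
  assumes "opdeg_le A 0" "opdeg_le V 0" "opmult A V = Lam 0" "opmult V A = Lam 0"
  shows "lower_inv A = V"
  unfolding lower_inv_def
proof (rule the_equality)
  show "(\<forall>i>0. V i = (\<lambda>p. 0)) \<and> opmult A V = Lam 0 \<and> opmult V A = Lam 0"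
    using assms by (simp add: opdeg_le_def)
next
  fix V' assume "(\<forall>i>0. V' i = (\<lambda>p. 0)) \<and> opmult A V' = Lam 0 \<and> opmult V' A = Lam 0"
  then have "opdeg_le V' 0" "opmult V' A = Lam 0" by (simp_all add: opdeg_le_def)
  then show "V' = V" using lower_inverse_unique[OF assms(1) _ assms(2) _ assms(3)] by blast
qed

text \<open>A left inverse \<open>V\<close> of \<open>A\<close> has itself a left inverse, which is then both \<open>A\<close> and a right
  inverse of \<open>V\<close>.\<close>
lemma lower_inv_is_inverse:
  assumes A: "opdeg_le A 0" and A0: "\<forall>p. A 0 p \<noteq> 0"
  shows "opdeg_le (lower_inv A) 0" "opmult A (lower_inv A) = Lam 0"
    "opmult (lower_inv A) A = Lam 0"
proof -
  define V where "V = left_inv A"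
  have V: "opdeg_le V 0" "opmult V A = Lam 0"
    unfolding V_def by (rule opdeg_le_left_inv, rule opmult_left_inv[OF A A0])
  have "\<forall>p. V 0 p \<noteq> 0" using A0 by (simp add: V_def left_inv_0)
  then have U: "opmult (left_inv V) V = Lam 0" by (rule opmult_left_inv[OF V(1)])
  have "left_inv V = A"
    by (rule lower_inverse_unique[OF V(1) opdeg_le_left_inv A U V(2)])
  then have "opmult A V = Lam 0" using U by simp
  then have "lower_inv A = V" by (rule lower_inv_eqI[OF A V(1) _ V(2)])
  then show "opdeg_le (lower_inv A) 0" "opmult A (lower_inv A) = Lam 0"
    "opmult (lower_inv A) A = Lam 0"
    using V \<open>opmult A V = Lam 0\<close> by simp_all
qed

lemma fracK_lower:
  assumes "opdeg_le W 0" "\<forall>p. W 0 p \<noteq> 0"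
  shows "opdeg_le (fracK W c) c" "opmult (fracK W c) W = opmult W (Lam c)"
proof -
  have WL: "opdeg_le (opmult W (Lam c)) (0 + c)"
    by (rule opdeg_le_opmult[OF assms(1) opdeg_le_Lam])
  show "opdeg_le (fracK W c) c"
    using opdeg_le_opmult[OF WL lower_inv_is_inverse(1)[OF assms]] by (simp add: fracK_def)
  show "opmult (fracK W c) W = opmult W (Lam c)"
    unfolding fracK_def
    by (simp add: opmult_assoc_opdeg_le[OF WL lower_inv_is_inverse(1)[OF assms] assms(1)]
        lower_inv_is_inverse(3)[OF assms])
qed

text \<open>The ring automorphism \<open>\<Lambda> \<mapsto> \<Lambda>^(-1)\<close>, \<open>s \<mapsto> -s\<close> exchanges operators of degree \<open>\<le> 0\<close>
  with those of order \<open>\<ge> 0\<close>; it reduces \<open>upper_inv\<close> and \<open>fracM\<close> to \<open>lower_inv\<close> and \<open>fracK\<close>.\<close>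
definition reflectpt :: "pt \<Rightarrow> pt" where
  "reflectpt p = p\<lparr>sv := - sv p\<rparr>"

definition opreflect :: "dop \<Rightarrow> dop" where
  "opreflect A = (\<lambda>i p. A (- i) (reflectpt p))"

lemma reflectpt_reflectpt [simp]: "reflectpt (reflectpt p) = p"
  by (simp add: reflectpt_def)

lemma reflectpt_shiftpt: "reflectpt (shiftpt i p) = shiftpt (- i) (reflectpt p)"
  by (simp add: reflectpt_def shiftpt_def)

lemma opreflect_opreflect [simp]: "opreflect (opreflect A) = A"
  by (simp add: opreflect_def)

lemma opreflect_Lam [simp]: "opreflect (Lam n) = Lam (- n)"
  by (auto simp: opreflect_def Lam_def fun_eq_iff)

lemma opreflect_opmult: "opreflect (opmult A B) = opmult (opreflect A) (opreflect B)"
proof (intro ext)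
  fix j p
  show "opreflect (opmult A B) j p = opmult (opreflect A) (opreflect B) j p"
    unfolding opreflect_def opmult_apply
    by (rule Sum_any.reindex_cong[OF bij_uminus]) (auto simp: reflectpt_shiftpt)
qed

lemma opreflect_0 [simp]: "opreflect A 0 p = A 0 (reflectpt p)"
  by (simp add: opreflect_def)

lemma opord_ge_opreflect_iff: "opord_ge (opreflect A) a \<longleftrightarrow> opdeg_le A (- a)"
  unfolding opord_ge_def opdeg_le_def opreflect_def fun_eq_iff
  by (metis neg_less_iff_less minus_minus reflectpt_reflectpt)

lemma opdeg_le_opreflect_iff: "opdeg_le (opreflect A) a \<longleftrightarrow> opord_ge A (- a)"
  using opord_ge_opreflect_iff[of "opreflect A" "- a"] by simp

lemma upper_inv_eq_opreflect:
  assumes A: "opord_ge A 0" and A0: "\<forall>p. A 0 p \<noteq> 0"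
  shows "upper_inv A = opreflect (lower_inv (opreflect A))"
proof -
  define V where "V = lower_inv (opreflect A)"
  have RA: "opdeg_le (opreflect A) 0" "\<forall>p. opreflect A 0 p \<noteq> 0"
    using A A0 by (simp_all add: opdeg_le_opreflect_iff)
  note V = lower_inv_is_inverse[OF RA, folded V_def]
  show ?thesis
    unfolding upper_inv_def V_def[symmetric]
  proof (rule the_equality)
    have "opmult A (opreflect V) = Lam 0" "opmult (opreflect V) A = Lam 0"
      using arg_cong[OF V(2), of opreflect] arg_cong[OF V(3), of opreflect]
      by (simp_all add: opreflect_opmult)
    with V(1) show "(\<forall>i<0. opreflect V i = (\<lambda>p. 0)) \<and> opmult A (opreflect V) = Lam 0
        \<and> opmult (opreflect V) A = Lam 0"
      by (simp add: opord_ge_def[symmetric] opord_ge_opreflect_iff)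
  next
    fix V' assume "(\<forall>i<0. V' i = (\<lambda>p. 0)) \<and> opmult A V' = Lam 0 \<and> opmult V' A = Lam 0"
    then have "opdeg_le (opreflect V') 0" "opmult (opreflect A) (opreflect V') = Lam 0"
      "opmult (opreflect V') (opreflect A) = Lam 0"
      by (simp_all add: opdeg_le_opreflect_iff opord_ge_def flip: opreflect_opmult)
    then have "V = opreflect V'"
      unfolding V_def by (rule lower_inv_eqI[OF RA(1)])
    then show "V' = opreflect V" by simp
  qed
qed

lemma fracM_upper:
  assumes "opord_ge W 0" "\<forall>p. W 0 p \<noteq> 0"
  shows "opord_ge (fracM W c) (- c)" "opmult (fracM W c) W = opmult W (Lam (- c))"
proof -
  have RW: "opdeg_le (opreflect W) 0" "\<forall>p. opreflect W 0 p \<noteq> 0"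
    using assms by (simp_all add: opdeg_le_opreflect_iff)
  have M: "fracM W c = opreflect (fracK (opreflect W) c)"
    by (simp add: fracM_def fracK_def upper_inv_eq_opreflect[OF assms] opreflect_opmult)
  show "opord_ge (fracM W c) (- c)"
    unfolding M opord_ge_opreflect_iff using fracK_lower(1)[OF RW] by simp
  show "opmult (fracM W c) W = opmult W (Lam (- c))"
    using arg_cong[OF fracK_lower(2)[OF RW, of c], of opreflect]
    by (simp add: M opreflect_opmult)
qed

lemma act_zero [simp]: "act (\<lambda>i p. 0) p z = 0"
  by (simp add: act_def)

lemma act_opmult_Lam:
  assumes "z \<noteq> 0"
  shows "act (opmult A (Lam c)) p z = z powi c * act A p z"
proof -
  have "act (opmult A (Lam c)) p z = (\<Sum>\<^sub>\<infinity>i. z powi c * (A (i - c) p * z powi (i - c)))"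
    unfolding act_def opmult_Lam_right
    by (intro infsum_cong) (simp add: power_int_diff[OF disjI1, OF assms] field_simps assms)
  also have "\<dots> = z powi c * (\<Sum>\<^sub>\<infinity>i. A (i - c) p * z powi (i - c))"
    by (rule infsum_cmult_right')
  also have "(\<Sum>\<^sub>\<infinity>i. A (i - c) p * z powi (i - c)) = act A p z"
    unfolding act_def by (rule infsum_reindex_bij_betw[OF bij_diff_right])
  finally show ?thesis .
qed

lemma has_sum_int_imp_sums:
  fixes f :: "int \<Rightarrow> 'a :: {comm_monoid_add, topological_space}"
  assumes "\<forall>i<0. f i = 0" and "(f has_sum S) UNIV"
  shows "(\<lambda>d. f (int d)) sums S"
proof -
  have "(f has_sum S) (range int)"
    using assms has_sum_cong_neutral[of "range int" UNIV f f S]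
    by (metis Diff_iff UNIV_I nonneg_int_cases rangeI not_le)
  then show ?thesis
    by (intro has_sum_imp_sums) (simp add: has_sum_reindex o_def)
qed

text \<open>A Laurent series without negative powers is a power series, hence continuous at \<open>0\<close>.\<close>
lemma power_series_int_eventually_nonzero:
  fixes a :: "int \<Rightarrow> complex"
  assumes a_neg: "\<forall>i<0. a i = 0" and a0: "a 0 \<noteq> 0"
    and summable: "\<forall>\<^sub>F z in at 0. (\<lambda>i. a i * z powi i) summable_on UNIV"
  shows "\<forall>\<^sub>F z in at 0. (\<Sum>\<^sub>\<infinity>i. a i * z powi i) \<noteq> 0"
proof -
  define g where "g u = suminf (\<lambda>d. a (int d) * u ^ d)" for u
  have sums: "(\<lambda>d. a (int d) * u ^ d) sums (\<Sum>\<^sub>\<infinity>i. a i * u powi i)"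
    if "(\<lambda>i. a i * u powi i) summable_on UNIV" for u
    using has_sum_int_imp_sums[of "\<lambda>i. a i * u powi i"] a_neg that by simp
  from summable obtain r where r: "r > 0"
    and r_summable: "\<And>u. u \<noteq> 0 \<Longrightarrow> dist u 0 < r \<Longrightarrow> (\<lambda>i. a i * u powi i) summable_on UNIV"
    unfolding eventually_at by auto
  define z0 where "z0 = complex_of_real (r / 2)"
  have "z0 \<noteq> 0" "dist z0 0 < r" using r by (auto simp: z0_def)
  then have "summable (\<lambda>d. a (int d) * z0 ^ d)"
    using sums r_summable sums_summable by blast
  then have "isCont g 0"
    unfolding g_def by (rule isCont_powser) (use \<open>z0 \<noteq> 0\<close> in simp)
  then have "(g \<longlongrightarrow> a 0) (at 0)" by (simp add: isCont_def g_def)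
  then have "\<forall>\<^sub>F z in at 0. g z \<noteq> 0" using a0 by (rule tendsto_imp_eventually_ne)
  moreover have "\<forall>\<^sub>F z in at 0. (\<Sum>\<^sub>\<infinity>i. a i * z powi i) = g z"
    using summable by eventually_elim (auto simp: g_def dest!: sums sums_unique)
  ultimately show ?thesis by eventually_elim simp
qed

lemma act_eventually_nonzero_at_0:
  assumes "opord_ge A 0" "A 0 p \<noteq> 0"
    and "\<forall>\<^sub>F z in at 0. (\<lambda>i. A i p * z powi i) summable_on UNIV"
  shows "\<forall>\<^sub>F z in at 0. act A p z \<noteq> 0"
  unfolding act_def
  by (rule power_series_int_eventually_nonzero) (use assms in \<open>auto simp: opord_ge_def\<close>)

lemma act_eventually_nonzero_at_infinity:
  assumes A: "opdeg_le A 0" and A0: "A 0 p \<noteq> 0"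
    and summable: "\<forall>\<^sub>F z in at_infinity. (\<lambda>i. A i p * z powi i) summable_on UNIV"
  shows "\<forall>\<^sub>F z in at_infinity. act A p z \<noteq> 0"
proof -
  define a where "a i = A (- i) p" for i
  have flip: "(\<lambda>i. a i * u powi i) = (\<lambda>i. A (- i) p * inverse u powi (- i))" for u
    by (simp add: a_def power_int_inverse power_int_minus)
  have "\<forall>\<^sub>F u in at 0. (\<lambda>i. a i * u powi i) summable_on UNIV"
    using summable unfolding at_to_infinity eventually_filtermap flip
    by (simp add: summable_on_reindex_bij_betw[OF bij_uminus, where f = "\<lambda>i. A i p * _ powi i"])
  then have "\<forall>\<^sub>F u in at 0. (\<Sum>\<^sub>\<infinity>i. a i * u powi i) \<noteq> 0"
    by (rule power_series_int_eventually_nonzero[rotated 2])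
      (use A A0 in \<open>auto simp: a_def opdeg_le_def\<close>)
  then show ?thesis
    unfolding at_to_infinity eventually_filtermap flip act_def
    by (simp add: infsum_reindex_bij_betw[OF bij_uminus, where f = "\<lambda>i. A i p * _ powi i"])
qed

lemma Gop_scaled_time:
  assumes "n \<noteq> 0"
  shows "Gop z (\<lambda>q. of_nat n * tv q n) p - of_nat n * tv p n = - (z powi - int n)"
  using assms by (simp add: Gop_def bracket_def power_int_minus field_simps)

lemma Gbar_scaled_dual_time:
  assumes "n \<noteq> 0"
  shows "Gbar z (\<lambda>q. of_nat n * tbv q n) p - of_nat n * tbv p n = z powi int n"
  using assms by (simp add: Gbar_def bracket_def field_simps)

theorem lemma4p3:
  fixes k m n :: nat and \<tau> :: fn and w wb :: "nat \<Rightarrow> fn"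
  assumes "k \<ge> 1" and "m \<ge> 1"
    and "tau_EBTH k m \<tau> w wb"
    and "n \<ge> 1"
  shows "(\<forall>p. \<forall>\<^sub>F z in at_infinity.
            - act (opmult (opminus (fracK (Wop w) (- int n))) (Wop w)) p z / act (Wop w) p z
              = Gop z (\<lambda>q. of_nat n * tv q n) p - of_nat n * tv p n)
       \<and> (\<forall>p. \<forall>\<^sub>F z in at 0.
            act (opmult (opplus (fracK (Wop w) (- int n))) (Wbop wb)) p z / act (Wbop wb) p z
              = Gbar z (\<lambda>q. of_nat n * tv q n) p - of_nat n * tv p n)
       \<and> (\<forall>p. \<forall>\<^sub>F z in at_infinity.
            - act (opmult (opminus (fracM (Wbop wb) (- int n))) (Wop w)) p z / act (Wop w) p z
              = Gop z (\<lambda>q. of_nat n * tbv q n) p - of_nat n * tbv p n)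
       \<and> (\<forall>p. \<forall>\<^sub>F z in at 0.
            act (opmult (opplus (fracM (Wbop wb) (- int n))) (Wbop wb)) p z / act (Wbop wb) p z
              = Gbar z (\<lambda>q. of_nat n * tbv q n) p - of_nat n * tbv p n)"
proof -
  have W: "opdeg_le (Wop w) 0" "\<forall>p. Wop w 0 p \<noteq> 0"
    by (auto simp: opdeg_le_def Wop_def)
  have Wb: "opord_ge (Wbop wb) 0" "\<forall>p. Wbop wb 0 p \<noteq> 0"
    using assms(3) by (auto simp: opord_ge_def Wbop_def tau_EBTH_def)
  have nonzero_at_infinity: "\<forall>\<^sub>F z in at_infinity. act (Wop w) p z \<noteq> 0 \<and> z \<noteq> 0" for p
    using assms(3) unfolding tau_EBTH_def
    by (intro eventually_conj act_eventually_nonzero_at_infinity[OF W(1)] eventually_not_equal_at_infinity)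
      (auto elim!: eventually_mono[OF _ has_sum_imp_summable] simp: W(2))
  have nonzero_at_0: "\<forall>\<^sub>F z in at 0. act (Wbop wb) p z \<noteq> 0 \<and> z \<noteq> 0" for p
    using assms(3) unfolding tau_EBTH_def
    by (intro eventually_conj act_eventually_nonzero_at_0[OF Wb(1)] eventually_neq_at_within)
      (auto elim!: eventually_mono[OF _ has_sum_imp_summable] simp: Wb(2))
  have n: "n \<noteq> 0" "- int n < 0" "0 \<le> - (- int n)" using assms(4) by simp_all
  note F = fracK_lower[OF W, of "- int n"] opminus_opplus_opdeg_le[OF fracK_lower(1)[OF W] n(2)]
  note G = fracM_upper[OF Wb, of "- int n"] opplus_opminus_opord_ge[OF fracM_upper(1)[OF Wb] n(3)]
  show ?thesis
  proof (intro conjI allI)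
    fix p
    show "\<forall>\<^sub>F z in at_infinity.
        - act (opmult (opminus (fracK (Wop w) (- int n))) (Wop w)) p z / act (Wop w) p z
          = Gop z (\<lambda>q. of_nat n * tv q n) p - of_nat n * tv p n"
      using nonzero_at_infinity[of p] by eventually_elim (simp add: F act_opmult_Lam Gop_scaled_time n)
    show "\<forall>\<^sub>F z in at 0.
        act (opmult (opplus (fracM (Wbop wb) (- int n))) (Wbop wb)) p z / act (Wbop wb) p z
          = Gbar z (\<lambda>q. of_nat n * tbv q n) p - of_nat n * tbv p n"
      using nonzero_at_0[of p] by eventually_elim (simp add: G act_opmult_Lam Gbar_scaled_dual_time n)
  qed (simp_all add: F(4) G(4) Gop_def Gbar_def)
qed

end
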